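(* Let $N\ge1$ and let $\lambda$ be a partition with $l(\lambda)\le N$. Then in $\mathbb Q(q,t)$: $$\frac{c_\lambda(q,t)}{\prod_{s\in\lambda}\bigl(1-q^{a'(s)}t^{N-l'(s)}\bigr)}=\frac{c_{\overline\lambda}(q,t)}{\prod_{s\in\overline\lambda}\bigl(1-q^{a'(s)}t^{N-l'(s)}\bigr)},\qquad \frac{c'_\lambda(q,t)}{\prod_{s\in\lambda}\bigl(1-q^{a'(s)+1}t^{N-1-l'(s)}\bigr)}=\frac{c'_{\overline\lambda}(q,t)}{\prod_{s\in\overline\lambda}\bigl(1-q^{a'(s)+1}t^{N-1-l'(s)}\bigr)},$$ where arm/leg quantities in products over $\overline\lambda$ are computed in $\overline\lambda$.
   Context: Partitions $\lambda=(\lambda_1\ge\lambda_2\ge\cdots)$ are identified with Young diagrams $\{(i,j): i\ge1,\ 1\le j\le\lambda_i\}$; $\lambda^t$ is the transpose, $l(\lambda)$ the number of nonzero parts. For a box $s=(i,j)\in\lambda$: arm $a(s)=\lambda_i-j$, leg $l(s)=\lambda^t_j-i$, arm-colength $a'(s)=j-1$, leg-colength $l'(s)=i-1$. Set $c_\lambda(q,t)=\prod_{s\in\lambda}(1-q^{a(s)}t^{l(s)+1})$, $c'_\lambda(q,t)=\prod_{s\in\lambda}(1-q^{a(s)+1}t^{l(s)})$. For $l(\lambda)\le N$, $\overline{\lambda}=(\lambda_1-\lambda_N,\dots,\lambda_{N-1}-\lambda_N)$ (remove all columns of height $N$). (Note the denominators are never identically zero for $l(\lambda)\le N$, as $l'(s)\le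 N-1$.) *)

theory Defs
  imports "HOL-Computational_Algebra.Polynomial" "HOL-Computational_Algebra.Fraction_Field"
begin

text \<open>Partitions are nonincreasing lists of positive naturals;
 l(lambda) is the length. Rows are indexed from 1.\<close>

definition is_partition :: "nat list \<Rightarrow> bool" where
  "is_partition lam \<longleftrightarrow> sorted_wrt (\<ge>) lam \<and> 0 \<notin> set lam"

definition part :: "nat list \<Rightarrow> nat \<Rightarrow> nat" where
  "part lam i = (if 1 \<le> i \<and> i \<le> length lam then lam ! (i - 1) else 0)"

definition diagram :: "nat list \<Rightarrow> (nat \<times> nat) set" where
  "diagram lam = {(i, j). 1 \<le> i \<and> 1 \<le> j \<and> j \<le> part lam i}"

definition conj_part :: "nat list \<Rightarrow> nat \<Rightarrow> nat" where
  "conj_part lam j = card {i. 1 \<le> i \<and> i \<le> length lam \<and> j \<le> part lam i}"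

definition arm :: "nat list \<Rightarrow> nat \<times> nat \<Rightarrow> nat" where
  "arm lam s = part lam (fst s) - snd s"
definition leg :: "nat list \<Rightarrow> nat \<times> nat \<Rightarrow> nat" where
  "leg lam s = conj_part lam (snd s) - fst s"
definition arm_co :: "nat \<times> nat \<Rightarrow> nat" where
  "arm_co s = snd s - 1"
definition leg_co :: "nat \<times> nat \<Rightarrow> nat" where
  "leg_co s = fst s - 1"

text \<open>lambda-bar: remove all columns of height N.\<close>
definition bar :: "nat \<Rightarrow> nat list \<Rightarrow> nat list" where
  "bar N lam = filter (\<lambda>x. 0 < x) (map (\<lambda>x. x - part lam N) (take (N - 1) lam))"

text \<open>The field Q(q,t) realised as the fraction field of Q[q][t]:
 t is the outer polynomial variable, q the inner one.\<close>
type_synonym qt = "rat poly poly fract"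

definition qv :: qt where "qv = Fract [:[:0, 1:]:] 1"
definition tv :: qt where "tv = Fract [:0, 1:] 1"

definition c_lam :: "nat list \<Rightarrow> qt" where
  "c_lam lam = (\<Prod>s\<in>diagram lam. 1 - qv ^ arm lam s * tv ^ (leg lam s + 1))"
definition c'_lam :: "nat list \<Rightarrow> qt" where
  "c'_lam lam = (\<Prod>s\<in>diagram lam. 1 - qv ^ (arm lam s + 1) * tv ^ leg lam s)"

end

theory Submission
  imports Defs
begin

text \<open>
  Let m = lambda_N.  The first m columns of lambda all have height N,
  and lambda-bar is lambda with these columns removed, i.e. its i-th row has
  length lambda_i - m.  Write numerator and denominator as row-by-row products
  over i = 1..N and fix an arbitrary weight h.  In the hook product
  prod h(a(s), l(s)) the boxes of the first m columns contribute
  h(lambda_i - j, N - i) (j = 1..m), and the remaining boxes are the boxes of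
  lambda-bar shifted by m columns, with unchanged arm and leg.  In the
  co-hook product prod h(a'(s), N - 1 - l'(s)) the last m boxes of each row
  contribute the very same factors, and the first lambda_i - m boxes form
  the corresponding row of lambda-bar.  Hence both products equal one common
  "full-column factor" times the product for lambda-bar, and the ratio is
  invariant (lemma hook_ratio_bar).  The theorem is the instance
  h(a,b) = 1 - q^a t^(b+1) for c and h(a,b) = 1 - q^(a+1) t^b for c'; these
  weights never vanish in Q(q,t).
\<close>

lemma part_0 [simp]: "part xs 0 = 0"
  by (simp add: part_def)
lemma part_Cons_1 [simp]: "part (x # xs) (Suc 0) = x"
  by (simp add: part_def)
lemma part_Cons_Suc [simp]: "part (x # xs) (Suc (Suc i)) = part xs (Suc i)"
  by (simp add: part_def)

lemma part_mono:
  assumes "is_partition lam" "1 \<le> i" "i \<le> i'"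
  shows "part lam i' \<le> part lam i"
proof (cases "i < i' \<and> i' \<le> length lam")
  case True
  then have "lam ! (i' - 1) \<le> lam ! (i - 1)"
    using assms(1,2) sorted_wrt_nth_less[of "(\<ge>)" lam "i - 1" "i' - 1"]
    by (simp add: is_partition_def less_diff_conv2)
  then show ?thesis using True assms by (simp add: part_def)
qed (use assms in \<open>auto simp: part_def\<close>)

text \<open>In a nonincreasing list the zeros sit at the end, so dropping them does
  not change any row.\<close>
lemma part_filter_pos:
  "sorted_wrt (\<ge>) (xs :: nat list) \<Longrightarrow> part (filter (\<lambda>x. 0 < x) xs) i = part xs i"
proof (induction xs arbitrary: i)
  case (Cons x xs)
  show ?case
  proof (cases "0 < x")
    case True
    consider "i = 0" | "i = Suc 0" | k where "i = Suc (Suc k)"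
      by (metis not0_implies_Suc)
    then show ?thesis using Cons True by cases auto
  next
    case False
    then have "\<forall>y \<in> set (x # xs). y = 0" using Cons.prems by auto
    then show ?thesis using False nth_mem[of "i - 1" "x # xs"]
      by (auto simp: part_def filter_empty_conv)
  qed
qed simp

lemma prod_split_first:
  "m \<le> (n::nat) \<Longrightarrow> (\<Prod>j\<in>{1..n}. h j) = (\<Prod>j\<in>{1..m}. h j) * (\<Prod>j\<in>{1..n - m}. h (j + m))"
  using prod.ub_add_nat[of 1 m h "n - m"] prod.shift_bounds_cl_nat_ivl[of h 1 m "n - m"]
  by (simp add: add.commute)

lemma prod_diagram:
  assumes "length lam \<le> N"
  shows "(\<Prod>s\<in>diagram lam. g s) = (\<Prod>i\<in>{1..N}. \<Prod>j\<in>{1..part lam i}. g (i, j))"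
proof -
  have "diagram lam = Sigma {1..N} (\<lambda>i. {1..part lam i})"
    using assms unfolding diagram_def by (auto simp: part_def split: if_splits)
  then show ?thesis by (simp add: prod.Sigma)
qed


lemma sorted_bar_list:
  "is_partition lam \<Longrightarrow> sorted_wrt (\<ge>) (map (\<lambda>x. x - m) (take k lam))"
  by (auto simp: is_partition_def sorted_wrt_map sorted_wrt_take
      intro: sorted_wrt_mono_rel[of _ "(\<ge>)"])

lemma part_bar:
  assumes "N \<ge> 1" and P: "is_partition lam" and "length lam \<le> N"
  shows "part (bar N lam) i = part lam i - part lam N"
proof -
  have "part (bar N lam) i = part (map (\<lambda>x. x - part lam N) (take (N - 1) lam)) i"
    unfolding bar_def using part_filter_pos[OF sorted_bar_list[OF P]] .
  also have "\<dots> = part lam i - part lam N"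
  proof (cases "1 \<le> i \<and> i \<le> N - 1")
    case False
    then have "i = 0 \<or> N \<le> i" using assms by auto
    then show ?thesis using part_mono[OF P \<open>N \<ge> 1\<close>, of i] by (auto simp: part_def)
  qed (auto simp: part_def)
  finally show ?thesis .
qed

lemma length_bar: "length (bar N lam) \<le> N"
  unfolding bar_def by (rule le_trans[OF length_filter_le]) simp

lemma leg_co_in_diagram:
  assumes "length lam \<le> N" "s \<in> diagram lam"
  shows "leg_co s < N"
  using assms by (auto simp: diagram_def part_def leg_co_def split: if_splits)

lemma conj_part_alt:
  "1 \<le> j \<Longrightarrow> conj_part lam j = card {i. 1 \<le> i \<and> j \<le> part lam i}"
  unfolding conj_part_def
  by (rule arg_cong[where f = card]) (auto simp: part_def split: if_splits)

lemma conj_part_full_column: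
  assumes "N \<ge> 1" "is_partition lam" "length lam \<le> N" "1 \<le> j" "j \<le> part lam N"
  shows "conj_part lam j = N"
proof -
  have "{i. 1 \<le> i \<and> j \<le> part lam i} = {1..N}"
  proof (intro set_eqI iffI)
    fix i assume "i \<in> {i. 1 \<le> i \<and> j \<le> part lam i}"
    then show "i \<in> {1..N}" using assms by (auto simp: part_def split: if_splits)
  next
    fix i assume "i \<in> {1..N}"
    then show "i \<in> {i. 1 \<le> i \<and> j \<le> part lam i}"
      using assms part_mono[OF assms(2), of i N] by auto
  qed
  then show ?thesis using conj_part_alt[OF assms(4)] by simp
qed

lemma conj_part_bar:
  assumes "N \<ge> 1" "is_partition lam" "length lam \<le> N" "1 \<le> j"
  shows "conj_part (bar N lam) j = conj_part lam (j + part lam N)"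
proof -
  have "{i. 1 \<le> i \<and> j \<le> part (bar N lam) i} = {i. 1 \<le> i \<and> j + part lam N \<le> part lam i}"
    using assms by (auto simp: part_bar)
  then show ?thesis using conj_part_alt[OF assms(4)] conj_part_alt[of "j + part lam N"] assms(4)
    by simp
qed

lemma prod_split_last:
  assumes "m \<le> (n::nat)"
  shows "(\<Prod>j\<in>{1..n}. h (j - 1)) = (\<Prod>j\<in>{1..m}. h (n - j)) * (\<Prod>j\<in>{1..n - m}. h (j - 1))"
proof -
  have "(\<Prod>j\<in>{1..m}. h (n - j)) = (\<Prod>j\<in>{1..m}. h (n - (1 + m - j)))"
    using prod.atLeastAtMost_rev[of "\<lambda>k. h (n - k)" 1 m] by (simp add: add.commute)
  also have "\<dots> = (\<Prod>j\<in>{1..m}. h (j + (n - m) - 1))"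
    by (rule prod.cong) (use assms in \<open>auto simp: add.commute\<close>)
  finally have "(\<Prod>j\<in>{1..m}. h (n - j)) = (\<Prod>j\<in>{1..m}. h (j + (n - m) - 1))" .
  then show ?thesis
    using prod_split_first[of "n - m" n "\<lambda>j. h (j - 1)"] assms by (simp add: mult.commute)
qed

text \<open>The common contribution of the full columns: box (i, j) of the first lambda_N
  columns has arm lambda_i - j and leg N - i.\<close>
definition full_col_factor :: "(nat \<Rightarrow> nat \<Rightarrow> 'a::comm_monoid_mult) \<Rightarrow> nat \<Rightarrow> nat list \<Rightarrow> 'a" where
  "full_col_factor h N lam = (\<Prod>i\<in>{1..N}. \<Prod>j\<in>{1..part lam N}. h (part lam i - j) (N - i))"

lemma hook_prod_bar:
  assumes N: "N \<ge> 1" and P: "is_partition lam" and L: "length lam \<le> N"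
  shows "(\<Prod>s\<in>diagram lam. h (arm lam s) (leg lam s))
       = full_col_factor h N lam * (\<Prod>s\<in>diagram (bar N lam). h (arm (bar N lam) s) (leg (bar N lam) s))"
proof -
  define m where "m = part lam N"
  let ?H = "\<lambda>i j. h (part lam i - j) (conj_part lam j - i)"
  have "(\<Prod>s\<in>diagram lam. h (arm lam s) (leg lam s)) = (\<Prod>i\<in>{1..N}. \<Prod>j\<in>{1..part lam i}. ?H i j)"
    unfolding prod_diagram[OF L] by (simp add: arm_def leg_def)
  also have "\<dots> = (\<Prod>i\<in>{1..N}. (\<Prod>j\<in>{1..m}. ?H i j) * (\<Prod>j\<in>{1..part lam i - m}. ?H i (j + m)))"
    using part_mono[OF P] by (intro prod.cong refl prod_split_first) (auto simp: m_def)
  also have "\<dots> = full_col_factor h N lam * (\<Prod>i\<in>{1..N}. \<Prod>j\<in>{1..part lam i - m}. ?H i (j + m))"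
    using conj_part_full_column[OF N P L]
    by (simp add: prod.distrib full_col_factor_def m_def)
  also have "(\<Prod>i\<in>{1..N}. \<Prod>j\<in>{1..part lam i - m}. ?H i (j + m))
           = (\<Prod>s\<in>diagram (bar N lam). h (arm (bar N lam) s) (leg (bar N lam) s))"
    unfolding prod_diagram[OF length_bar] part_bar[OF N P L] m_def
    by (intro prod.cong refl) (auto simp: arm_def leg_def part_bar[OF N P L] conj_part_bar[OF N P L] add.commute)
  finally show ?thesis .
qed

text \<open>The co-hook product of lambda is the same factor times that of lambda-bar:
  in row i the last lambda_N boxes carry arm-colength lambda_i - j and
  N - 1 - l\<acute>(s) = N - i.\<close>
lemma colength_prod_bar:
  assumes N: "N \<ge> 1" and P: "is_partition lam" and L: "length lam \<le> N"
  shows "(\<Prod>s\<in>diagram lam. h (arm_co s) (N - 1 - leg_co s))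
       = full_col_factor h N lam * (\<Prod>s\<in>diagram (bar N lam). h (arm_co s) (N - 1 - leg_co s))"
proof -
  define m where "m = part lam N"
  let ?R = "\<lambda>i k. h k (N - i)"
  have row: "N - 1 - (i - 1) = N - i" if "i \<in> {1..N}" for i using that by auto
  have "(\<Prod>s\<in>diagram lam. h (arm_co s) (N - 1 - leg_co s))
      = (\<Prod>i\<in>{1..N}. \<Prod>j\<in>{1..part lam i}. ?R i (j - 1))"
    unfolding prod_diagram[OF L] arm_co_def leg_co_def by (intro prod.cong refl) (simp add: row)
  also have "\<dots> = (\<Prod>i\<in>{1..N}. (\<Prod>j\<in>{1..m}. ?R i (part lam i - j))
                                 * (\<Prod>j\<in>{1..part lam i - m}. ?R i (j - 1)))"
    using part_mono[OF P] by (intro prod.cong refl prod_split_last) (auto simp: m_def)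
  also have "\<dots> = full_col_factor h N lam * (\<Prod>s\<in>diagram (bar N lam). h (arm_co s) (N - 1 - leg_co s))"
    unfolding prod_diagram[OF length_bar] prod.distrib full_col_factor_def arm_co_def leg_co_def
    by (intro arg_cong2[where f = "(*)"] prod.cong refl) (simp_all add: row part_bar[OF N P L] m_def)
  finally show ?thesis .
qed

lemma hook_ratio_bar:
  fixes h :: "nat \<Rightarrow> nat \<Rightarrow> 'a::field"
  assumes "N \<ge> 1" "is_partition lam" "length lam \<le> N" and nz: "\<And>a b. h a b \<noteq> 0"
  shows "(\<Prod>s\<in>diagram lam. h (arm lam s) (leg lam s)) / (\<Prod>s\<in>diagram lam. h (arm_co s) (N - 1 - leg_co s))
       = (\<Prod>s\<in>diagram (bar N lam). h (arm (bar N lam) s) (leg (bar N lam) s))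
         / (\<Prod>s\<in>diagram (bar N lam). h (arm_co s) (N - 1 - leg_co s))"
proof -
  have "full_col_factor h N lam \<noteq> 0" using nz by (simp add: full_col_factor_def)
  then show ?thesis
    unfolding hook_prod_bar[OF assms(1-3)] colength_prod_bar[OF assms(1-3)]
    by (rule mult_divide_mult_cancel_left)
qed

lemma Fract_power: "Fract (a::'a::idom) 1 ^ n = Fract (a ^ n) 1"
  by (induction n) (simp_all add: One_fract_def)

text \<open>q^a t^b is the monomial X^a Y^b of Q[X][Y], which is 1 only for a = b = 0.\<close>
lemma monomial_eq_one:
  assumes "qv ^ a * tv ^ b = 1"
  shows "a = 0 \<and> b = 0"
proof -
  have "qv ^ a * tv ^ b = Fract (monom ([:0, 1:] ^ a) b) 1"
    unfolding qv_def tv_def Fract_power mult_fract by (simp add: poly_const_pow monom_altdef)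
  with assms have mon: "monom ([:0, 1:] ^ a) b = (1 :: rat poly poly)"
    by (simp add: One_fract_def eq_fract)
  then have b: "b = 0"
    using degree_monom_eq[of "[:0, 1:] ^ a :: rat poly" b] by simp
  have "coeff (monom ([:0, 1:] ^ a) b :: rat poly poly) 0 = 1"
    using mon by simp
  with b have "(monom 1 a :: rat poly) = 1"
    by (simp add: monom_altdef)
  then have "a = 0"
    using degree_monom_eq[of "1 :: rat" a] by simp
  with b show ?thesis by simp
qed

lemma monomial_factor_nonzero: "a \<noteq> 0 \<or> b \<noteq> 0 \<Longrightarrow> 1 - qv ^ a * tv ^ b \<noteq> 0"
  using monomial_eq_one by force

theorem lemma2p4:
  fixes N :: nat and lam :: "nat list"
  assumes "N \<ge> 1" and "is_partition lam" and "length lam \<le> N"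
  shows "c_lam lam / (\<Prod>s\<in>diagram lam. 1 - qv ^ arm_co s * tv ^ (N - leg_co s))
           = c_lam (bar N lam) / (\<Prod>s\<in>diagram (bar N lam). 1 - qv ^ arm_co s * tv ^ (N - leg_co s))
         \<and> c'_lam lam / (\<Prod>s\<in>diagram lam. 1 - qv ^ (arm_co s + 1) * tv ^ (N - 1 - leg_co s))
           = c'_lam (bar N lam) / (\<Prod>s\<in>diagram (bar N lam). 1 - qv ^ (arm_co s + 1) * tv ^ (N - 1 - leg_co s))"
proof
  \<comment> \<open>c is the case h(a,b) = 1 - q^a t^(b+1), using N - 1 - l\<acute>(s) + 1 = N - l\<acute>(s).\<close>
  have den: "(\<Prod>s\<in>diagram l. 1 - qv ^ arm_co s * tv ^ (N - leg_co s))
           = (\<Prod>s\<in>diagram l. 1 - qv ^ arm_co s * tv ^ (N - 1 - leg_co s + 1))"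
    if "length l \<le> N" for l
    using leg_co_in_diagram[OF that] by (intro prod.cong refl) (simp add: Suc_diff_Suc)
  show "c_lam lam / (\<Prod>s\<in>diagram lam. 1 - qv ^ arm_co s * tv ^ (N - leg_co s))
      = c_lam (bar N lam) / (\<Prod>s\<in>diagram (bar N lam). 1 - qv ^ arm_co s * tv ^ (N - leg_co s))"
    unfolding c_lam_def den[OF assms(3)] den[OF length_bar]
    by (rule hook_ratio_bar[OF assms], rule monomial_factor_nonzero) simp
next
  \<comment> \<open>c' is the case h(a,b) = 1 - q^(a+1) t^b.\<close>
  show "c'_lam lam / (\<Prod>s\<in>diagram lam. 1 - qv ^ (arm_co s + 1) * tv ^ (N - 1 - leg_co s))
      = c'_lam (bar N lam) / (\<Prod>s\<in>diagram (bar N lam). 1 - qv ^ (arm_co s + 1) * tv ^ (N - 1 - leg_co s))"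
    unfolding c'_lam_def
    by (rule hook_ratio_bar[OF assms], rule monomial_factor_nonzero) simp
qed

end
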